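(* Let $k,m>1$ be integers and $g\in S_{km}$ acting on $\{1,\dots,km\}$. Then $g$ preserves some partition of $\{1,\dots,km\}$ into $k$ blocks each of size $m$ (equivalently, $g$ lies in an imprimitive permutation group with $k$ blocks of size $m$) if and only if the cycle partition of $g$ (the multiset of its cycle lengths, fixed points counted as cycles of length $1$) is an i-partition of type $(k,m)$.
   Context: Let $k,m$ be positive integers. If $(m_1,\dots,m_l)$ is a partition of $m$, then the partition $(km_1,\dots,km_l)$ of $km$ is called an ic-partition of type $(k,m)$. For a partition $P$, a clustering of $P$ is a partition of the multiset of parts of $P$ into sub-multisets $P_1,\dots,P_r$ (called clusters), each regarded as a partition of the sum of its elements. A partition of $km$ is an i-partition of type $(k,m)$ if it has a clustering $P_1,\dots,P_r$ and there is a partition $(k_1,\dots,k_r)$ of $k$ such that, for each $i$, $P_i$ is an ic-partition (of $k_im$) of type $(k_i,m)$. *)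

theory Defs
  imports "HOL-Combinatorics.Combinatorics" "HOL-Library.Multiset" "HOL-Library.Disjoint_Sets"
begin

definition is_int_partition :: "nat \<Rightarrow> nat multiset \<Rightarrow> bool" where
  "is_int_partition n P \<longleftrightarrow> (\<forall>x\<in>#P. 0 < x) \<and> sum_mset P = n"

definition ic_partition :: "nat \<Rightarrow> nat \<Rightarrow> nat multiset \<Rightarrow> bool" where
  "ic_partition k m P \<longleftrightarrow> (\<exists>Q. is_int_partition m Q \<and> P = image_mset (\<lambda>x. k * x) Q)"

text \<open>i-partition of type (k,m): a clustering P = P_1 + ... + P_r (clusters nonempty) together
  with a partition (k_1,...,k_r) of k such that each P_i is an ic-partition of type (k_i,m).
  The clustering is encoded as a multiset of pairs (k_i, P_i).\<close>
definition i_partition :: "nat \<Rightarrow> nat \<Rightarrow> nat multiset \<Rightarrow> bool" where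
  "i_partition k m P \<longleftrightarrow>
     (\<exists>C :: (nat \<times> nat multiset) multiset.
        (\<forall>c\<in>#C. snd c \<noteq> {#} \<and> ic_partition (fst c) m (snd c)) \<and>
        is_int_partition k (image_mset fst C) \<and>
        sum_mset (image_mset snd C) = P)"

definition cycle_partition :: "('a \<Rightarrow> 'a) \<Rightarrow> 'a set \<Rightarrow> nat multiset" where
  "cycle_partition g A = image_mset card (mset_set ((\<lambda>x. orbit g x) ` A))"

definition preserves_block_system :: "('a \<Rightarrow> 'a) \<Rightarrow> 'a set \<Rightarrow> nat \<Rightarrow> nat \<Rightarrow> bool" where
  "preserves_block_system g A k m \<longleftrightarrow>
     (\<exists>B. partition_on A B \<and> card B = k \<and> (\<forall>b\<in>B. card b = m) \<and> (\<forall>b\<in>B. g ` b \<in> B))"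

end

theory Submission
  imports Defs
begin

text \<open>If g preserves a system of k blocks of size m, then g permutes the blocks. An orbit of
  this action of length d covers d m points, and every cycle of g through these points returns
  to its starting block only after a multiple of d steps, so its length is divisible by d; hence
  the cycle lengths on the union of the orbit form an ic-partition of type (d, m), and the
  orbit lengths on blocks form a partition of k.

  Conversely, split the cycles of g according to a clustering of type (k, m). On the points of
  a cluster of type (d, m) every cycle length is a multiple of d, so colouring each point by its
  distance, modulo d, from a fixed point of its cycle gives d colour classes that g permutes
  cyclically; they have equal size, hence size m.\<close>

lemma card_orbit_eq_funpow_dist1:
  assumes "permutation g"
  shows "card (orbit g x) = funpow_dist1 g x x"
proof -
  have x: "x \<in> orbit g x" using permutation_self_in_orbit[OF assms] .
  show ?thesis
    unfolding orbit_conv_funpow_dist1[OF x] using card_image[OF inj_on_funpow_dist1[OF x]] by simp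
qed

lemma card_orbit_pos:
  assumes "permutation g"
  shows "0 < card (orbit g x)"
  using card_orbit_eq_funpow_dist1[OF assms] by simp

lemma funpow_eq_iff_mod_card_orbit:
  assumes "permutation g"
  shows "(g ^^ i) x = (g ^^ j) x \<longleftrightarrow> i mod card (orbit g x) = j mod card (orbit g x)"
proof -
  define p where "p = card (orbit g x)"
  have x: "x \<in> orbit g x" using permutation_self_in_orbit[OF assms] .
  have p: "p = funpow_dist1 g x x" using card_orbit_eq_funpow_dist1[OF assms] p_def by simp
  have period: "(g ^^ p) x = x" using funpow_dist1_prop[OF x] p by simp
  have inj: "inj_on (\<lambda>n. (g ^^ n) x) {0..<p}" using inj_on_funpow_dist1[OF x] p by simp
  have "(g ^^ i) x = (g ^^ j) x \<longleftrightarrow> (g ^^ (i mod p)) x = (g ^^ (j mod p)) x"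
    using funpow_mod_eq[OF period] by simp
  also have "\<dots> \<longleftrightarrow> i mod p = j mod p"
    using inj_on_eq_iff[OF inj, of "i mod p" "j mod p"] p by simp
  finally show ?thesis unfolding p_def .
qed

lemma funpow_eq_self_iff_card_orbit_dvd:
  assumes "permutation g"
  shows "(g ^^ n) x = x \<longleftrightarrow> card (orbit g x) dvd n"
  using funpow_eq_iff_mod_card_orbit[OF assms, of n x 0] by (simp add: dvd_eq_mod_eq_0)

lemma orbit_eq_of_mem:
  assumes "permutation g" "y \<in> orbit g x"
  shows "orbit g y = orbit g x"
  using orbit_cyclic_eq3[OF cyclic_on_orbit'[OF assms(1)] assms(2)] .

lemma notin_orbit_step:
  assumes "permutation h" "X \<notin> orbit h b"
  shows "h X \<notin> orbit h b"
proof
  assume "h X \<in> orbit h b"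
  then have "orbit h X = orbit h b"
    using orbit_eq_of_mem[OF assms(1)] permutation_orbit_step[OF assms(1)] by metis
  then show False using assms permutation_self_in_orbit by metis
qed

lemma disjoint_orbits:
  assumes "permutation g"
  shows "disjoint (orbit g ` A)"
proof (rule disjointI)
  fix X Y assume XY: "X \<in> orbit g ` A" "Y \<in> orbit g ` A" "X \<noteq> Y"
  show "X \<inter> Y = {}"
  proof (rule ccontr)
    assume "X \<inter> Y \<noteq> {}"
    then obtain z where "z \<in> X" "z \<in> Y" by blast
    then have "orbit g z = X" "orbit g z = Y" using XY(1,2) orbit_eq_of_mem[OF assms] by auto
    then show False using XY(3) by simp
  qed
qed

lemma orbit_subset_of_invariant:
  assumes "g ` A \<subseteq> A" "x \<in> A"
  shows "orbit g x \<subseteq> A"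
proof
  fix y assume "y \<in> orbit g x"
  then show "y \<in> A" by induction (use assms in auto)
qed

lemma Union_orbits_of_invariant:
  assumes "permutation g" "g ` A \<subseteq> A"
  shows "\<Union>(orbit g ` A) = A"
  using orbit_subset_of_invariant[OF assms(2)] permutation_self_in_orbit[OF assms(1)] by blast

lemma image_Union_orbits_subset:
  assumes "T \<subseteq> range (orbit g)"
  shows "g ` \<Union>T \<subseteq> \<Union>T"
proof
  fix z assume "z \<in> g ` \<Union>T"
  then obtain X y where X: "X \<in> T" "y \<in> X" "z = g y" by blast
  obtain x where "X = orbit g x" using assms X(1) by blast
  with X have "z \<in> X" by (simp add: orbit.step)
  then show "z \<in> \<Union>T" using X(1) by blast
qed

lemma orbit_image_Union_orbits:
  assumes "permutation g" "T \<subseteq> range (orbit g)"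
  shows "orbit g ` \<Union>T = T"
proof
  have "orbit g y = X" if XT: "X \<in> T" and yX: "y \<in> X" for X y
  proof -
    obtain x where "X = orbit g x" using assms(2) XT by blast
    with yX show ?thesis using orbit_eq_of_mem[OF assms(1)] by simp
  qed
  then show "orbit g ` \<Union>T \<subseteq> T" by blast
  show "T \<subseteq> orbit g ` \<Union>T"
  proof
    fix X assume "X \<in> T"
    then obtain x where "X = orbit g x" using assms(2) by blast
    then have "x \<in> X" "orbit g x = X" using permutation_self_in_orbit[OF assms(1)] by auto
    then show "X \<in> orbit g ` \<Union>T" using \<open>X \<in> T\<close> by blast
  qed
qed

lemma cycle_partition_Un:
  assumes "permutation g" "finite A1" "finite A2" "A1 \<inter> A2 = {}" "g ` A1 \<subseteq> A1" "g ` A2 \<subseteq> A2"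
  shows "cycle_partition g (A1 \<union> A2) = cycle_partition g A1 + cycle_partition g A2"
proof -
  have "orbit g ` A1 \<inter> orbit g ` A2 = {}"
  proof (rule ccontr)
    assume "orbit g ` A1 \<inter> orbit g ` A2 \<noteq> {}"
    then obtain x y where xy: "x \<in> A1" "y \<in> A2" "orbit g x = orbit g y" by auto
    then have "x \<in> orbit g y" using permutation_self_in_orbit[OF assms(1)] by metis
    then show False using orbit_subset_of_invariant[OF assms(6) xy(2)] xy(1) assms(4) by blast
  qed
  then show ?thesis
    unfolding cycle_partition_def image_Un using mset_set_Union assms(2,3)
    by (metis finite_imageI image_mset_union)
qed

lemma sum_cycle_partition:
  assumes "permutation g" "finite A" "g ` A \<subseteq> A"
  shows "sum_mset (cycle_partition g A) = card A"
proof -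
  have U: "\<Union>(orbit g ` A) = A" using Union_orbits_of_invariant[OF assms(1,3)] .
  have fin: "\<And>X. X \<in> orbit g ` A \<Longrightarrow> finite X"
    using U assms(2) by (metis Union_upper finite_subset)
  have "card A = sum card (orbit g ` A)"
    using card_Union_disjoint[OF disjoint_orbits[OF assms(1), of A] fin] U by simp
  then show ?thesis unfolding cycle_partition_def by (simp add: sum_unfold_sum_mset)
qed

lemma mem_cycle_partition_iff:
  assumes "finite A"
  shows "n \<in># cycle_partition g A \<longleftrightarrow> (\<exists>x\<in>A. n = card (orbit g x))"
  using assms unfolding cycle_partition_def by auto

lemma cycle_partition_eq_empty_iff:
  assumes "finite A"
  shows "cycle_partition g A = {#} \<longleftrightarrow> A = {}"
  using assms unfolding cycle_partition_def by (auto simp: mset_set_empty_iff)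

lemma i_partition_empty: "i_partition 0 m {#}"
  unfolding i_partition_def by (rule exI[of _ "{#}"]) (simp add: is_int_partition_def)

lemma i_partition_add:
  assumes "i_partition k1 m P1" "i_partition k2 m P2"
  shows "i_partition (k1 + k2) m (P1 + P2)"
proof -
  obtain C1 where "\<forall>c\<in>#C1. snd c \<noteq> {#} \<and> ic_partition (fst c) m (snd c)"
     "is_int_partition k1 (image_mset fst C1)" "sum_mset (image_mset snd C1) = P1"
    using assms(1) unfolding i_partition_def by blast
  moreover obtain C2 where "\<forall>c\<in>#C2. snd c \<noteq> {#} \<and> ic_partition (fst c) m (snd c)"
     "is_int_partition k2 (image_mset fst C2)" "sum_mset (image_mset snd C2) = P2"
    using assms(2) unfolding i_partition_def by blast
  ultimately show ?thesis
    unfolding i_partition_def by (intro exI[of _ "C1 + C2"]) (auto simp: is_int_partition_def)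
qed

lemma i_partition_of_ic_partition:
  assumes "0 < k" "P \<noteq> {#}" "ic_partition k m P"
  shows "i_partition k m P"
  unfolding i_partition_def
  by (rule exI[of _ "{#(k, P)#}"]) (use assms in \<open>simp add: is_int_partition_def\<close>)

lemma ic_partition_cycle_partition_iff:
  assumes "permutation g" "finite A" "g ` A \<subseteq> A" "0 < d"
  shows "ic_partition d m (cycle_partition g A) \<longleftrightarrow>
         (\<forall>x\<in>A. d dvd card (orbit g x)) \<and> card A = d * m"
proof
  assume "ic_partition d m (cycle_partition g A)"
  then obtain Q where Q: "is_int_partition m Q" "cycle_partition g A = image_mset ((*) d) Q"
    unfolding ic_partition_def by blast
  have "d dvd card (orbit g x)" if "x \<in> A" for x
    using that mem_cycle_partition_iff[OF assms(2), of "card (orbit g x)" g] Q(2) by auto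
  moreover have "card A = d * m"
  proof -
    have "card A = sum_mset (image_mset ((*) d) Q)"
      using sum_cycle_partition[OF assms(1-3)] Q(2) by simp
    also have "\<dots> = d * m"
      using sum_mset_distrib_left[of d "\<lambda>x. x" Q] Q(1) by (simp add: is_int_partition_def)
    finally show ?thesis .
  qed
  ultimately show "(\<forall>x\<in>A. d dvd card (orbit g x)) \<and> card A = d * m" by blast
next
  assume dvd: "(\<forall>x\<in>A. d dvd card (orbit g x)) \<and> card A = d * m"
  define Q where "Q = image_mset (\<lambda>n. n div d) (cycle_partition g A)"
  have mem: "d dvd n \<and> 0 < n" if "n \<in># cycle_partition g A" for n
    using that dvd mem_cycle_partition_iff[OF assms(2)] card_orbit_pos[OF assms(1)] by metis
  have "image_mset ((*) d) Q = image_mset (\<lambda>n. n) (cycle_partition g A)"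
    unfolding Q_def image_mset.compositionality using mem by (intro image_mset_cong) auto
  then have P: "cycle_partition g A = image_mset ((*) d) Q" by simp
  have "d * sum_mset Q = d * m"
    using sum_cycle_partition[OF assms(1-3)] dvd P sum_mset_distrib_left[of d "\<lambda>x. x" Q] by simp
  moreover have "\<forall>q\<in>#Q. 0 < q"
    unfolding Q_def using mem assms(4) by (auto simp: div_greater_zero_iff dvd_imp_le)
  ultimately show "ic_partition d m (cycle_partition g A)"
    unfolding ic_partition_def is_int_partition_def using P assms(4) by auto
qed

lemma preserves_block_system_empty: "preserves_block_system g {} 0 m"
  unfolding preserves_block_system_def by (rule exI[of _ "{}"]) (simp add: partition_on_empty)

lemma preserves_block_system_Un:
  assumes "finite A1" "finite A2" "A1 \<inter> A2 = {}"
    and "preserves_block_system g A1 k1 m" "preserves_block_system g A2 k2 m"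
  shows "preserves_block_system g (A1 \<union> A2) (k1 + k2) m"
proof -
  obtain B1 where B1: "partition_on A1 B1" "card B1 = k1" "\<forall>b\<in>B1. card b = m" "\<forall>b\<in>B1. g ` b \<in> B1"
    using assms(4) unfolding preserves_block_system_def by blast
  obtain B2 where B2: "partition_on A2 B2" "card B2 = k2" "\<forall>b\<in>B2. card b = m" "\<forall>b\<in>B2. g ` b \<in> B2"
    using assms(5) unfolding preserves_block_system_def by blast
  have A1: "A1 = \<Union>B1" and A2: "A2 = \<Union>B2" using B1(1) B2(1) by (simp_all add: partition_onD1)
  have "finite B1" "finite B2" using assms(1,2) finite_UnionD unfolding A1 A2 by blast+
  moreover have "B1 \<inter> B2 = {}"
  proof (rule ccontr)
    assume "B1 \<inter> B2 \<noteq> {}"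
    then obtain X where X: "X \<in> B1" "X \<in> B2" by blast
    then obtain x where "x \<in> X" using partition_onD3[OF B1(1)] by (metis ex_in_conv)
    then have "x \<in> A1 \<inter> A2" using X unfolding A1 A2 by blast
    then show False using assms(3) by simp
  qed
  ultimately have "card (B1 \<union> B2) = k1 + k2" using card_Un_disjoint B1(2) B2(2) by metis
  moreover have "partition_on (A1 \<union> A2) (B1 \<union> B2)"
  proof (rule partition_onI)
    show "\<Union>(B1 \<union> B2) = A1 \<union> A2" unfolding A1 A2 by blast
    show "{} \<notin> B1 \<union> B2" using partition_onD3[OF B1(1)] partition_onD3[OF B2(1)] by blast
  next
    fix X Y assume "X \<in> B1 \<union> B2" "Y \<in> B1 \<union> B2" "X \<noteq> Y"
    moreover have "disjoint (B1 \<union> B2)"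
      using partition_onD2[OF B1(1)] partition_onD2[OF B2(1)] assms(3)
      unfolding A1 A2 by (rule disjoint_union)
    ultimately show "disjnt X Y" by (simp add: disjoint_def disjnt_def)
  qed
  ultimately show ?thesis
    unfolding preserves_block_system_def using B1(3,4) B2(3,4) by (intro exI[of _ "B1 \<union> B2"]) auto
qed

lemma preserves_block_system_of_colouring:
  fixes col :: "'a \<Rightarrow> nat"
  assumes inj: "inj g" and fin: "finite A" and gA: "g ` A = A"
    and d: "0 < d" and m: "0 < m" and cardA: "card A = d * m"
    and col_lt: "\<forall>y. col y < d" and col_step: "\<forall>y\<in>A. col (g y) = Suc (col y) mod d"
  shows "preserves_block_system g A d m"
proof -
  define blk where "blk t = {y \<in> A. col y = t}" for t
  have g_blk: "g ` blk t = blk (Suc t mod d)" if "t < d" for t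
  proof
    show "g ` blk t \<subseteq> blk (Suc t mod d)" unfolding blk_def using col_step gA by auto
    show "blk (Suc t mod d) \<subseteq> g ` blk t"
    proof
      fix z assume z: "z \<in> blk (Suc t mod d)"
      then obtain y where y: "y \<in> A" "z = g y" unfolding blk_def using gA by auto
      then have "Suc (col y) mod d = Suc t mod d" using z col_step unfolding blk_def by simp
      then have "col y = t"
        using col_lt[rule_format, of y] that by (auto simp: mod_Suc split: if_splits)
      then show "z \<in> g ` blk t" using y unfolding blk_def by blast
    qed
  qed
  have card_blk: "card (blk t) = card (blk 0)" if "t < d" for t
    using that
  proof (induction t)
    case (Suc t)
    then have "blk (Suc t) = g ` blk t" using g_blk[of t] by simp
    then show ?case using Suc card_image[OF inj_on_subset[OF inj subset_UNIV]] by simp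
  qed simp
  have A_blk: "A = (\<Union>t<d. blk t)" unfolding blk_def using col_lt by auto
  have "card A = (\<Sum>t<d. card (blk t))"
    unfolding A_blk by (rule card_UN_disjoint) (auto simp: blk_def fin)
  also have "\<dots> = (\<Sum>t<d. card (blk 0))" by (rule sum.cong[OF refl]) (rule card_blk, simp)
  also have "\<dots> = d * card (blk 0)" by simp
  finally have "d * card (blk 0) = d * m" using cardA by linarith
  then have card_m: "card (blk t) = m" if "t < d" for t
    using card_blk[OF that] d by simp
  then have nonempty: "blk t \<noteq> {}" if "t < d" for t using that m by fastforce
  have "inj_on blk {..<d}"
    using nonempty by (intro inj_onI) (auto simp: blk_def)
  then have "card (blk ` {..<d}) = d" by (simp add: card_image)
  moreover have "partition_on A (blk ` {..<d})"
    using A_blk nonempty unfolding partition_on_def disjoint_def blk_def by auto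
  ultimately show ?thesis
    unfolding preserves_block_system_def using card_m g_blk d
    by (intro exI[of _ "blk ` {..<d}"]) auto
qed

lemma cyclic_colouring_of_dvd_card_orbit:
  assumes perm: "permutation g" and d: "0 < d" and dvd: "\<forall>y\<in>A. d dvd card (orbit g y)"
  obtains col :: "'a \<Rightarrow> nat" where "\<forall>y. col y < d" "\<forall>y\<in>A. col (g y) = Suc (col y) mod d"
proof
  define rep where "rep y = (SOME r. r \<in> orbit g y)" for y
  have rep_in: "rep y \<in> orbit g y" for y
    unfolding rep_def using permutation_self_in_orbit[OF perm] by (rule someI)
  have rep_step: "rep (g y) = rep y" for y
    unfolding rep_def using permutation_orbit_step[OF perm] by simp
  have orbit_rep: "orbit g (rep y) = orbit g y" for y using orbit_eq_of_mem[OF perm rep_in] .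
  \<comment> \<open>well defined on a cycle because d divides its length\<close>
  define col where "col y = funpow_dist g (rep y) y mod d" for y
  show "\<forall>y. col y < d" unfolding col_def using d by simp
  show "\<forall>y\<in>A. col (g y) = Suc (col y) mod d"
  proof
    fix y assume "y \<in> A"
    define r where "r = rep y"
    define j where "j = funpow_dist g r y"
    define j' where "j' = funpow_dist g r (g y)"
    have y: "y \<in> orbit g r" unfolding r_def orbit_rep using permutation_self_in_orbit[OF perm] .
    have "(g ^^ j') r = g y" unfolding j'_def using orbit.step[OF y] by (rule funpow_dist_prop)
    moreover have "(g ^^ Suc j) r = g y" unfolding j_def using funpow_dist_prop[OF y] by simp
    ultimately have "j' mod card (orbit g r) = Suc j mod card (orbit g r)"
      using funpow_eq_iff_mod_card_orbit[OF perm] by metis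
    moreover have "d dvd card (orbit g r)" unfolding r_def orbit_rep using dvd \<open>y \<in> A\<close> by blast
    ultimately have "j' mod d = Suc j mod d" by (metis mod_mod_cancel)
    then show "col (g y) = Suc (col y) mod d"
      unfolding col_def rep_step j'_def j_def r_def by (simp add: mod_Suc_eq)
  qed
qed

lemma preserves_block_system_of_dvd_card_orbit:
  assumes perm: "permutation g" and fin: "finite A" and inv: "g ` A \<subseteq> A"
    and "0 < d" "0 < m" "\<forall>x\<in>A. d dvd card (orbit g x)" "card A = d * m"
  shows "preserves_block_system g A d m"
proof -
  have inj: "inj g" using perm permutation_bijective bij_is_inj by blast
  then have "g ` A = A" using endo_inj_surj[OF fin inv] inj_on_subset by blast
  obtain col where "\<forall>y. col y < d" "\<forall>y\<in>A. col (g y) = Suc (col y) mod d"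
    using cyclic_colouring_of_dvd_card_orbit[OF perm \<open>0 < d\<close> assms(6)] .
  then show ?thesis
    using preserves_block_system_of_colouring[OF inj fin \<open>g ` A = A\<close>] assms(4,5,7) by blast
qed

lemma disjoint_Union_Diff:
  assumes "disjoint B" "C \<subseteq> B"
  shows "\<Union>C \<inter> \<Union>(B - C) = {}"
proof (rule ccontr)
  assume "\<Union>C \<inter> \<Union>(B - C) \<noteq> {}"
  then obtain x X Y where XY: "X \<in> C" "Y \<in> B - C" "x \<in> X" "x \<in> Y" by blast
  then have "X \<inter> Y = {}" using disjointD[OF assms(1), of X Y] assms(2) by blast
  then show False using XY by blast
qed

lemma image_mset_mset_set_split:
  assumes fin: "finite S" and eq: "image_mset f (mset_set S) = M1 + M2"
  obtains S1 where "S1 \<subseteq> S" "image_mset f (mset_set S1) = M1"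
    "image_mset f (mset_set (S - S1)) = M2"
proof -
  obtain N1 N2 where N: "mset_set S = N1 + N2" "M1 = image_mset f N1" "M2 = image_mset f N2"
    using image_mset_eq_plusD[OF eq] by blast
  define S1 where "S1 = set_mset N1"
  have sub: "S1 \<subseteq> S" unfolding S1_def
    using N(1) fin by (metis Un_iff elem_mset_set set_mset_union subsetI)
  have "count N1 x \<le> 1" for x
  proof -
    have "count N1 x \<le> count (mset_set S) x" using N(1) by simp
    also have "\<dots> \<le> 1" by (simp add: count_mset_set')
    finally show ?thesis .
  qed
  then have "mset_set S1 = N1" unfolding S1_def
  proof (intro multiset_eqI)
    fix x assume le: "\<And>x. count N1 x \<le> 1"
    show "count (mset_set (set_mset N1)) x = count N1 x"
      using le[of x] by (cases "x \<in># N1") (auto simp: count_mset_set' count_eq_zero_iff le_Suc_eq)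
  qed
  moreover have "mset_set (S - S1) = N2"
    using mset_set_Diff[OF fin sub] N(1) \<open>mset_set S1 = N1\<close> by simp
  ultimately show ?thesis using that sub N by blast
qed

lemma cycle_partition_split:
  assumes perm: "permutation g" and fin: "finite A" and inv: "g ` A \<subseteq> A"
    and eq: "cycle_partition g A = P1 + P2"
  obtains A1 A2 where "A = A1 \<union> A2" "A1 \<inter> A2 = {}" "g ` A1 \<subseteq> A1" "g ` A2 \<subseteq> A2"
    "cycle_partition g A1 = P1" "cycle_partition g A2 = P2"
proof -
  define S where "S = orbit g ` A"
  obtain S1 where S1: "S1 \<subseteq> S" "image_mset card (mset_set S1) = P1"
      "image_mset card (mset_set (S - S1)) = P2"
   
      using image_mset_mset_set_split[of S card P1 P2] fin eq
      unfolding S_def cycle_partition_def by auto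
  have orbits: "S1 \<subseteq> range (orbit g)" "S - S1 \<subseteq> range (orbit g)"
    using S1(1) unfolding S_def by blast+
  have "\<Union>S = A" unfolding S_def using Union_orbits_of_invariant[OF perm inv] .
  then have "A = \<Union>S1 \<union> \<Union>(S - S1)" using S1(1) by blast
  moreover have "\<Union>S1 \<inter> \<Union>(S - S1) = {}"
    using disjoint_Union_Diff[OF disjoint_orbits[OF perm] S1(1)[unfolded S_def]] unfolding S_def .
  moreover have "cycle_partition g (\<Union>S1) = P1" "cycle_partition g (\<Union>(S - S1)) = P2"
    unfolding cycle_partition_def orbit_image_Union_orbits[OF perm orbits(1)]
      orbit_image_Union_orbits[OF perm orbits(2)] using S1(2,3) by simp_all
  ultimately show ?thesis
   
      using that image_Union_orbits_subset[OF orbits(1)] image_Union_orbits_subset[OF orbits(2)]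
      by simp
qed

lemma preserves_block_system_of_clusters:
  assumes perm: "permutation g" and m: "0 < m"
    and "\<forall>c\<in>#C. 0 < fst c \<and> ic_partition (fst c) m (snd c)" "finite A" "g ` A \<subseteq> A"
    and "cycle_partition g A = sum_mset (image_mset snd C)"
  shows "preserves_block_system g A (sum_mset (image_mset fst C)) m"
  using assms(3-6)
proof (induction C arbitrary: A)
  case empty
  then have "A = {}" using cycle_partition_eq_empty_iff[OF empty.prems(2)] by simp
  then show ?case using preserves_block_system_empty by simp
next
  case (add c C)
  have "cycle_partition g A = snd c + sum_mset (image_mset snd C)" using add.prems(4) by simp
  then obtain A1 A2 where A: "A = A1 \<union> A2" "A1 \<inter> A2 = {}" "g ` A1 \<subseteq> A1" "g ` A2 \<subseteq> A2"
      "cycle_partition g A1 = snd c" "cycle_partition g A2 = sum_mset (image_mset snd C)"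
    using cycle_partition_split[OF perm add.prems(2,3)] by blast
  have fin: "finite A1" "finite A2" using add.prems(2) A(1) by simp_all
  have c: "0 < fst c" "ic_partition (fst c) m (cycle_partition g A1)"
    using add.prems(1) A(5) by simp_all
  then have "preserves_block_system g A1 (fst c) m"
    using ic_partition_cycle_partition_iff[OF perm fin(1) A(3) c(1)]
      preserves_block_system_of_dvd_card_orbit[OF perm fin(1) A(3) c(1) m] by simp
  moreover have "preserves_block_system g A2 (sum_mset (image_mset fst C)) m"
    using add.IH[OF _ fin(2) A(4) A(6)] add.prems(1) by simp
  ultimately show ?case using preserves_block_system_Un[OF fin A(2)] A(1) by simp
qed

lemma partition_on_Union_subset:
  assumes "partition_on A B" "C \<subseteq> B"
  shows "partition_on (\<Union>C) C"
  using assms pairwise_subset[of disjnt B C] unfolding partition_on_def by blast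

text \<open>The action of g on a set B of blocks, extended by the identity outside B so that it is a
  permutation of B in the sense of \<open>permutes\<close>.\<close>
definition block_action :: "('a \<Rightarrow> 'a) \<Rightarrow> 'a set set \<Rightarrow> 'a set \<Rightarrow> 'a set" where
  "block_action g B X = (if X \<in> B then g ` X else X)"

lemma block_action_permutes:
  assumes "inj g" "finite B" "\<forall>X\<in>B. g ` X \<in> B"
  shows "block_action g B permutes B"
proof (rule bij_imp_permutes)
  have "inj_on (block_action g B) B"
    using assms(1) by (auto simp: inj_on_def block_action_def inj_image_eq_iff)
  moreover have "block_action g B ` B \<subseteq> B" using assms(3) by (auto simp: block_action_def)
  ultimately show "bij_betw (block_action g B) B B"
    using endo_inj_surj[OF assms(2)] by (simp add: bij_betw_def)
  show "block_action g B X = X" if "X \<notin> B" for X using that by (simp add: block_action_def)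
qed

lemma funpow_block_action:
  assumes "\<forall>X\<in>B. g ` X \<in> B" "X \<in> B"
  shows "(block_action g B ^^ n) X = (g ^^ n) ` X \<and> (g ^^ n) ` X \<in> B"
proof (induction n)
  case (Suc n)
  have "(g ^^ Suc n) ` X = g ` (g ^^ n) ` X" by (simp add: image_comp)
  then show ?case using Suc assms(1) by (simp add: block_action_def)
qed (use assms(2) in simp)

lemma block_action_orbit:
  assumes "inj g" "finite B" "\<forall>X\<in>B. g ` X \<in> B" "b \<in> B"
  defines "C \<equiv> orbit (block_action g B) b"
  shows "b \<in> C" "C \<subseteq> B" "\<forall>X\<in>C. g ` X \<in> C" "\<forall>X\<in>B - C. g ` X \<in> B - C"
proof -
  define h where "h = block_action g B"
  have h: "h permutes B" unfolding h_def using block_action_permutes assms(1-3) by blast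
  then have perm_h: "permutation h" using assms(2) permutes_imp_permutation by blast
  have h_eq: "h X = g ` X" if "X \<in> B" for X using that unfolding h_def block_action_def by simp
  show "b \<in> C" unfolding C_def h_def[symmetric] using permutation_self_in_orbit[OF perm_h] .
  show CB: "C \<subseteq> B" unfolding C_def h_def[symmetric] using permutes_orbit_subset[OF h assms(4)] .
  show "\<forall>X\<in>C. g ` X \<in> C"
  proof
    fix X assume "X \<in> C"
    then have "h X \<in> C" unfolding C_def h_def by (rule orbit.step)
    then show "g ` X \<in> C" using h_eq \<open>X \<in> C\<close> CB by auto
  qed
  show "\<forall>X\<in>B - C. g ` X \<in> B - C"
  proof
    fix X assume X: "X \<in> B - C"
    then have "h X \<notin> C" unfolding C_def h_def[symmetric] using notin_orbit_step[OF perm_h] by blast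
    then show "g ` X \<in> B - C" using h_eq X assms(3) by auto
  qed
qed

lemma ic_partition_cycle_partition_block_orbit:
  assumes perm: "permutation g" and fin: "finite A" and part: "partition_on A B"
    and card: "\<forall>X\<in>B. card X = m" and closed: "\<forall>X\<in>B. g ` X \<in> B" and b: "b \<in> B"
  defines "C \<equiv> orbit (block_action g B) b"
  shows "ic_partition (card C) m (cycle_partition g (\<Union>C))"
proof -
  define h where "h = block_action g B"
  have finB: "finite B" using fin finite_UnionD partition_onD1[OF part] by blast
  have inj: "inj g" using perm permutation_bijective bij_is_inj by blast
  then have perm_h: "permutation h"
    unfolding h_def using block_action_permutes finB closed permutes_imp_permutation by blast
  note C = block_action_orbit[OF inj finB closed b, folded C_def]
  have finU: "finite (\<Union>C)"
    using fin C(2) partition_onD1[OF part] by (metis Union_mono finite_subset)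
  have invU: "g ` \<Union>C \<subseteq> \<Union>C" using C(3) by blast
  have finC: "finite C" using finB C(2) finite_subset by blast
  have "card (\<Union>C) = (\<Sum>X\<in>C. card X)"
    using partition_onD2[OF partition_on_Union_subset[OF part C(2)]] finU
    by (intro card_Union_disjoint) (auto intro: finite_subset)
  also have "\<dots> = (\<Sum>X\<in>C. m)" using card C(2) by (intro sum.cong) auto
  also have "\<dots> = card C * m" by simp
  finally have card_U: "card (\<Union>C) = card C * m" .
  have "\<forall>x\<in>\<Union>C. card C dvd card (orbit g x)"
  proof
    fix x assume "x \<in> \<Union>C"
    obtain X where X: "X \<in> C" "x \<in> X" using \<open>x \<in> \<Union>C\<close> by blast
    define n where "n = card (orbit g x)"
    have "(g ^^ n) x = x" using funpow_eq_self_iff_card_orbit_dvd[OF perm] n_def by simp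
    then have x: "x \<in> (g ^^ n) ` X" using X(2) by (metis imageI)
    have XB: "X \<in> B" using X(1) C(2) by blast
    note hn = funpow_block_action[OF closed XB, of n, folded h_def]
    have "(g ^^ n) ` X = X"
      using disjointD[OF partition_onD2[OF part] conjunct2[OF hn] XB] x X(2) by blast
    then have "card (orbit h X) dvd n"
      using conjunct1[OF hn] funpow_eq_self_iff_card_orbit_dvd[OF perm_h] by simp
    moreover have "orbit h X = C"
      using orbit_eq_of_mem[OF perm_h] X(1) unfolding C_def h_def by blast
    ultimately show "card C dvd card (orbit g x)" unfolding n_def by simp
  qed
  moreover have "0 < card C" using finC C(1) by (auto simp: card_gt_0_iff)
  ultimately show ?thesis
    using ic_partition_cycle_partition_iff[OF perm finU invU] card_U by (simp only: mult.commute)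
qed

lemma i_partition_cycle_partition_of_blocks:
  assumes "permutation g" "finite A" "partition_on A B" "\<forall>X\<in>B. card X = m" "\<forall>X\<in>B. g ` X \<in> B"
  shows "i_partition (card B) m (cycle_partition g A)"
  using assms(2-5)
proof (induction "card B" arbitrary: A B rule: less_induct)
  case less
  note fin = less.prems(1) and part = less.prems(2)
    and card = less.prems(3) and closed = less.prems(4)
  have A: "A = \<Union>B" using partition_onD1[OF part] .
  show ?case
  proof (cases "B = {}")
    case True
    then show ?thesis using A i_partition_empty cycle_partition_eq_empty_iff[of "{}" g] by simp
  next
    case False
    then obtain b where b: "b \<in> B" by blast
    define C where "C = orbit (block_action g B) b"
    have finB: "finite B" using fin unfolding A by (rule finite_UnionD)
    have "inj g" using assms(1) permutation_bijective bij_is_inj by blast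
    from block_action_orbit[OF this finB closed b, folded C_def]
    have "b \<in> C" and CB: "C \<subseteq> B" and closed_C: "\<forall>X\<in>C. g ` X \<in> C"
      and closed_rest: "\<forall>X\<in>B - C. g ` X \<in> B - C" by blast+
    have ic: "ic_partition (card C) m (cycle_partition g (\<Union>C))"
      unfolding C_def
        using ic_partition_cycle_partition_block_orbit[OF assms(1) fin part card closed b] .
    have "\<Union>C \<subseteq> A" "\<Union>(B - C) \<subseteq> A" unfolding A using CB by blast+
    then have fin_C: "finite (\<Union>C)" "finite (\<Union>(B - C))" using fin finite_subset by blast+
    have "b \<noteq> {}" using partition_onD3[OF part] b by auto
    then have "\<Union>C \<noteq> {}" using \<open>b \<in> C\<close> by (metis Union_upper subset_empty)
    then have "cycle_partition g (\<Union>C) \<noteq> {#}" using cycle_partition_eq_empty_iff[OF fin_C(1)] by simp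
    moreover have finC: "finite C" using finB CB by (rule finite_subset[rotated])
    then have "0 < card C" using \<open>b \<in> C\<close> by (auto simp: card_gt_0_iff)
    ultimately have ip_C: "i_partition (card C) m (cycle_partition g (\<Union>C))"
      using i_partition_of_ic_partition[OF \<open>0 < card C\<close> _ ic] by blast
    have "card B = card C + card (B - C)"
      using card_Diff_subset[OF finC CB] card_mono[OF finB CB] by simp
    then have "card (B - C) < card B" using \<open>0 < card C\<close> by linarith
    moreover have "partition_on (\<Union>(B - C)) (B - C)"
      using partition_on_Union_subset[OF part] by blast
    ultimately have ip_rest: "i_partition (card (B - C)) m (cycle_partition g (\<Union>(B - C)))"
      using less.hyps[OF _ fin_C(2) _ _ closed_rest] card by blast
    have "A = \<Union>C \<union> \<Union>(B - C)" unfolding A using CB by blast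
    moreover have "\<Union>C \<inter> \<Union>(B - C) = {}" using disjoint_Union_Diff[OF partition_onD2[OF part] CB] .
    moreover have "g ` \<Union>C \<subseteq> \<Union>C" "g ` \<Union>(B - C) \<subseteq> \<Union>(B - C)"
      using closed_C closed_rest by blast+
    ultimately have "cycle_partition g A = cycle_partition g (\<Union>C) + cycle_partition g (\<Union>(B - C))"
      using cycle_partition_Un[OF assms(1) fin_C] by simp
    then show ?thesis
      using i_partition_add[OF ip_C ip_rest] \<open>card B = card C + card (B - C)\<close> by simp
  qed
qed

theorem mainTheorem2:
  fixes k m :: nat and g :: "nat \<Rightarrow> nat"
  assumes "k > 1" and "m > 1" and "g permutes {1..k*m}"
  shows "preserves_block_system g {1..k*m} k m \<longleftrightarrow>
         i_partition k m (cycle_partition g {1..k*m})"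
proof -
  define A where "A = {1..k*m}"
  have fin: "finite A" unfolding A_def by simp
  have perm: "permutation g" using permutes_imp_permutation[OF _ assms(3)] by simp
  have inv: "g ` A \<subseteq> A" unfolding A_def using permutes_image[OF assms(3)] by simp
  have "preserves_block_system g A k m \<longleftrightarrow> i_partition k m (cycle_partition g A)"
  proof
    assume "preserves_block_system g A k m"
    then obtain B where "partition_on A B" "card B = k" "\<forall>X\<in>B. card X = m" "\<forall>X\<in>B. g ` X \<in> B"
      unfolding preserves_block_system_def by blast
    then show "i_partition k m (cycle_partition g A)"
      using i_partition_cycle_partition_of_blocks[OF perm fin] by blast
  next
    assume "i_partition k m (cycle_partition g A)"
    then obtain C where C: "\<forall>c\<in>#C. snd c \<noteq> {#} \<and> ic_partition (fst c) m (snd c)"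
        "is_int_partition k (image_mset fst C)" "sum_mset (image_mset snd C) = cycle_partition g A"
      unfolding i_partition_def by blast
    then have "\<forall>c\<in>#C. 0 < fst c \<and> ic_partition (fst c) m (snd c)" "sum_mset (image_mset fst C) = k"
      unfolding is_int_partition_def by auto
    then show "preserves_block_system g A k m"
      using preserves_block_system_of_clusters[OF perm _ _ fin inv C(3)[symmetric]] assms(2) by simp
  qed
  then show ?thesis unfolding A_def .
qed

end
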